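(* Let $\mathcal{G}=(\mathcal{V},\mathcal{E})$ be a connected time-invariant undirected graph on $\mathcal{V}=\{1,\dots,n\}$ with a fixed doubly stochastic weight matrix $\mathbf{W}=[w_{ij}]$ satisfying the standing weight conventions. Suppose each $\mu_i(0)\in\mathfrak{U}_2(\mathbb{R})$ is Gaussian with density $\mathcal{N}(p_i(0),P_i(0))$, $P_i(0)>0$, and that agents update by $\mu_i(t+1)=\operatorname{argmin}_{\eta\in\mathfrak{U}_2(\mathbb{R})}\sum_{j\in\mathcal{N}_i}w_{ij}\ell_2(\eta,\mu_j(t))^2$. Then each $\mu_i(t+1)$ is Gaussian with density $\mathcal{N}(p_i(t+1),P_i(t+1))$, where $$p_i(t+1)=\sum_{j\in\mathcal{N}_i}w_{ij}p_j(t),\qquad P_i^{1/2}(t+1)=\sum_{j\in\mathcal{N}_i}w_{ij}P_j^{1/2}(t).$$ Moreover, for every $i\in\mathcal{V}$, $\ell_2(\mu_i(t),\mu^\ast)\to0$ exponentially fast as $t\to\infty$, where $\mu^\ast=\operatorname{argmin}_{\eta\in\mathfrak{U}_2(\mathbb{R})}\frac1n\sum_{j\in\mathcal{V}}\ell_2(\eta,\mu_j(0))^2$.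
   Context: $\mathfrak{U}_2(\mathbb{R})$ is the set of Borel probability measures on $\mathbb{R}$ with finite second moment; $\ell_2(\mu,\nu)=\big(\inf_{\gamma\in\Gamma(\mu,\nu)}\int|x-y|^2d\gamma\big)^{1/2}$ is the 2-Wasserstein distance over couplings $\Gamma(\mu,\nu)$. $\mathcal{N}_i=\{j:(i,j)\in\mathcal{E}\}$ contains $i$; $w_{ij}>0$ iff $j\in\mathcal{N}_i$, $w_{ij}=0$ otherwise, $w_{ii}>0$, and doubly stochastic means all row sums and column sums equal $1$. Exponentially fast means there exist $C>0$, $\rho\in(0,1)$ with $\ell_2(\mu_i(t),\mu^\ast)\le C\rho^t$. *)

theory Defs
  imports "HOL-Probability.Probability"
begin

definition U2 :: "real measure \<Rightarrow> bool" where
  "U2 M \<longleftrightarrow> prob_space M \<and> sets M = sets borel \<and> integrable M (\<lambda>x. x\<^sup>2)"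

definition couplings :: "real measure \<Rightarrow> real measure \<Rightarrow> (real \<times> real) measure set" where
  "couplings \<mu> \<nu> = {\<gamma>. prob_space \<gamma> \<and> sets \<gamma> = sets (borel :: (real \<times> real) measure)
      \<and> distr \<gamma> borel fst = \<mu> \<and> distr \<gamma> borel snd = \<nu>}"

text \<open>2-Wasserstein distance (the infimum of the transport cost is taken in the
  extended nonnegative reals; it is finite on U2).\<close>
definition W2 :: "real measure \<Rightarrow> real measure \<Rightarrow> real" where
  "W2 \<mu> \<nu> = sqrt (enn2real (INF \<gamma> \<in> couplings \<mu> \<nu>. \<integral>\<^sup>+ z. ennreal ((fst z - snd z)\<^sup>2) \<partial>\<gamma>))"

definition gaussian :: "real \<Rightarrow> real \<Rightarrow> real measure" where
  "gaussian p P = density lborel (\<lambda>x. ennreal (normal_density p (sqrt P) x))"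

definition nbhd :: "(nat \<times> nat) set \<Rightarrow> nat \<Rightarrow> nat set" where
  "nbhd E i = {j. (i, j) \<in> E}"

definition connected_undirected_graph :: "nat \<Rightarrow> (nat \<times> nat) set \<Rightarrow> bool" where
  "connected_undirected_graph n E \<longleftrightarrow> n \<ge> 1 \<and> E \<subseteq> {..<n} \<times> {..<n} \<and> sym E
     \<and> (\<forall>i<n. (i, i) \<in> E) \<and> (\<forall>i<n. \<forall>j<n. (i, j) \<in> E\<^sup>*)"

definition adapted_doubly_stochastic :: "nat \<Rightarrow> (nat \<times> nat) set \<Rightarrow> (nat \<Rightarrow> nat \<Rightarrow> real) \<Rightarrow> bool" where
  "adapted_doubly_stochastic n E w \<longleftrightarrow>
     (\<forall>i<n. \<forall>j<n. (w i j > 0 \<longleftrightarrow> (i, j) \<in> E) \<and> ((i, j) \<notin> E \<longrightarrow> w i j = 0))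
     \<and> (\<forall>i<n. w i i > 0)
     \<and> (\<forall>i<n. (\<Sum>j<n. w i j) = 1) \<and> (\<forall>j<n. (\<Sum>i<n. w i j) = 1)"

definition is_argmin_U2 :: "(real measure \<Rightarrow> real) \<Rightarrow> real measure \<Rightarrow> bool" where
  "is_argmin_U2 F \<eta> \<longleftrightarrow> U2 \<eta> \<and> (\<forall>\<xi>. U2 \<xi> \<longrightarrow> F \<eta> \<le> F \<xi>)"

end

theory Submission
  imports Defs
begin

(* On the real line the squared 2-Wasserstein distance is bounded below by the Gelbrich
   bound  (mean eta - mean nu)^2 + (sd eta - sd nu)^2, because every coupling has covariance
   at most sd eta * sd nu.  For two Gaussians the bound is attained by the monotone affine
   coupling, so W2 between Gaussians has a closed form.  Conversely, a measure attaining the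
   bound against a nondegenerate measure nu is the affine image of nu (a characteristic
   function argument with Levy's uniqueness theorem); against a Gaussian it is Gaussian.

   Consequently the weighted Wasserstein barycenter of N(p_j, s_j^2) is unique and equals
   N(sum w_j p_j, (sum w_j s_j)^2): means and standard deviations of the agents follow the
   linear averaging iteration x(t+1) = W x(t).  For a doubly stochastic W adapted to a
   connected graph with positive diagonal, the spread max - min of this iteration contracts
   by a fixed factor over a fixed number of steps, so it converges exponentially to the
   average.  The distance from agent i to the barycenter of the initial measures is at most
   the sum of the mean and standard-deviation errors, which gives the theorem. *)

section \<open>Gaussian measures\<close>

lemma gaussian_sets [simp]: "sets (gaussian p P) = sets borel"
  by (simp add: gaussian_def)

lemma gaussian_sq: "\<sigma> > 0 \<Longrightarrow> gaussian p (\<sigma>\<^sup>2) = density lborel (\<lambda>x. ennreal (normal_density p \<sigma> x))"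
  by (simp add: gaussian_def)

lemma prob_space_gaussian: "\<sigma> > 0 \<Longrightarrow> prob_space (gaussian p (\<sigma>\<^sup>2))"
  by (simp add: gaussian_sq prob_space_normal_density)

lemma gaussian_integral:
  assumes s: "\<sigma> > 0" and f[measurable]: "f \<in> borel_measurable borel"
  shows "integrable (gaussian p (\<sigma>\<^sup>2)) f \<longleftrightarrow> integrable lborel (\<lambda>x. normal_density p \<sigma> x * f x)"
    and "integral\<^sup>L (gaussian p (\<sigma>\<^sup>2)) f = integral\<^sup>L lborel (\<lambda>x. normal_density p \<sigma> x * f x)"
  unfolding gaussian_sq[OF s] by (subst integrable_density integral_density; simp)+

lemma gaussian_first_moment:
  assumes "\<sigma> > 0"
  shows "integrable (gaussian p (\<sigma>\<^sup>2)) (\<lambda>x. x)" "integral\<^sup>L (gaussian p (\<sigma>\<^sup>2)) (\<lambda>x. x) = p"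
  using assms by (simp_all add: gaussian_integral integrable_normal_moment_nz_1
      integral_normal_moment_nz_1)

lemma gaussian_central_moment:
  assumes s: "\<sigma> > 0"
  shows "integrable (gaussian p (\<sigma>\<^sup>2)) (\<lambda>x. (x - p)\<^sup>2)"
    and "integral\<^sup>L (gaussian p (\<sigma>\<^sup>2)) (\<lambda>x. (x - p)\<^sup>2) = \<sigma>\<^sup>2"
  using s integrable_normal_moment[OF s, of p 2] integral_normal_moment_even[OF s, where k=1 and \<mu>=p]
  by (simp_all add: gaussian_integral)

lemma U2_gaussian: "\<sigma> > 0 \<Longrightarrow> U2 (gaussian p (\<sigma>\<^sup>2))"
proof -
  assume s: "\<sigma> > 0"
  have "integrable (gaussian p (\<sigma>\<^sup>2)) (\<lambda>x. (x - p)\<^sup>2 + 2 * p * x - p\<^sup>2)"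
    using gaussian_central_moment(1)[OF s] gaussian_first_moment(1)[OF s] prob_space_gaussian[OF s]
    by (simp add: prob_space.finite_measure finite_measure.integrable_const)
  also have "(\<lambda>x. (x - p)\<^sup>2 + 2 * p * x - p\<^sup>2) = (\<lambda>x. x\<^sup>2)"
    by (auto simp: power2_eq_square algebra_simps)
  finally show ?thesis
    using prob_space_gaussian[OF s] by (simp add: U2_def)
qed

lemma gaussian_affine:
  assumes s: "\<sigma> > 0" and k: "k > 0"
  shows "distr (gaussian p (\<sigma>\<^sup>2)) borel (\<lambda>y. m + k * (y - p)) = gaussian m ((k * \<sigma>)\<^sup>2)"
proof -
  interpret prob_space "gaussian p (\<sigma>\<^sup>2)" by (rule prob_space_gaussian[OF s])
  have "distributed (gaussian p (\<sigma>\<^sup>2)) lborel (\<lambda>x. x) (normal_density p \<sigma>)"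
    unfolding distributed_def using s by (simp add: gaussian_sq distr_id2)
  then have "distributed (gaussian p (\<sigma>\<^sup>2)) lborel (\<lambda>x. (m - k * p) + k * x)
               (normal_density ((m - k * p) + k * p) (\<bar>k\<bar> * \<sigma>))"
    by (rule normal_density_affine[OF _ s]) (use k in auto)
  then have "distr (gaussian p (\<sigma>\<^sup>2)) lborel (\<lambda>x. (m - k * p) + k * x)
               = density lborel (normal_density m (k * \<sigma>))"
    using k by (simp add: distributed_def)
  moreover have "distr (gaussian p (\<sigma>\<^sup>2)) borel (\<lambda>y. m + k * (y - p))
               = distr (gaussian p (\<sigma>\<^sup>2)) lborel (\<lambda>x. (m - k * p) + k * x)"
    by (rule distr_cong) (auto simp: algebra_simps)
  ultimately show ?thesis using k s by (simp add: gaussian_sq)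
qed

section \<open>Couplings and the Gelbrich lower bound\<close>

definition mean_of :: "real measure \<Rightarrow> real" where
  "mean_of \<eta> = (\<integral>x. x \<partial>\<eta>)"

definition var_of :: "real measure \<Rightarrow> real" where
  "var_of \<eta> = (\<integral>x. (x - mean_of \<eta>)\<^sup>2 \<partial>\<eta>)"

text \<open>The Gelbrich bound: the squared W2 distance between Gaussians with the same first two
  moments as the arguments.\<close>
definition gelbrich :: "real measure \<Rightarrow> real measure \<Rightarrow> real" where
  "gelbrich \<eta> \<nu> = (mean_of \<eta> - mean_of \<nu>)\<^sup>2 + (sqrt (var_of \<eta>) - sqrt (var_of \<nu>))\<^sup>2"

lemma var_of_nonneg: "var_of \<eta> \<ge> 0"
  unfolding var_of_def by simp

lemma mean_of_gaussian: "\<sigma> > 0 \<Longrightarrow> mean_of (gaussian p (\<sigma>\<^sup>2)) = p"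
  using gaussian_first_moment by (simp add: mean_of_def)

lemma var_of_gaussian: "\<sigma> > 0 \<Longrightarrow> var_of (gaussian p (\<sigma>\<^sup>2)) = \<sigma>\<^sup>2"
  using gaussian_central_moment by (simp add: var_of_def mean_of_gaussian)

lemma gelbrich_gaussian:
  "\<alpha> > 0 \<Longrightarrow> \<beta> > 0 \<Longrightarrow> gelbrich (gaussian a (\<alpha>\<^sup>2)) (gaussian b (\<beta>\<^sup>2)) = (a - b)\<^sup>2 + (\<alpha> - \<beta>)\<^sup>2"
  by (simp add: gelbrich_def mean_of_gaussian var_of_gaussian)

lemma fst_borel [measurable]: "fst \<in> borel_measurable (borel :: (real \<times> real) measure)"
  by (subst borel_prod[symmetric]) (rule measurable_fst)

lemma snd_borel [measurable]: "snd \<in> borel_measurable (borel :: (real \<times> real) measure)"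
  by (subst borel_prod[symmetric]) (rule measurable_snd)

lemma couplingD:
  assumes "\<gamma> \<in> couplings \<eta> \<nu>"
  shows "prob_space \<gamma>" "sets \<gamma> = sets borel" "distr \<gamma> borel fst = \<eta>" "distr \<gamma> borel snd = \<nu>"
  using assms by (auto simp: couplings_def)

lemma coupling_measurable:
  assumes "\<gamma> \<in> couplings \<eta> \<nu>" and "f \<in> borel_measurable borel"
  shows "f \<in> borel_measurable \<gamma>"
  using assms by (simp add: measurable_cong_sets[OF couplingD(2)[OF assms(1)] refl])

lemma coupling_marginal_integral:
  fixes f :: "real \<Rightarrow> real"
  assumes c: "\<gamma> \<in> couplings \<eta> \<nu>" and f[measurable]: "f \<in> borel_measurable borel"
  shows "integrable \<gamma> (\<lambda>z. f (fst z)) \<longleftrightarrow> integrable \<eta> f"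
    and "integral\<^sup>L \<gamma> (\<lambda>z. f (fst z)) = integral\<^sup>L \<eta> f"
    and "integrable \<gamma> (\<lambda>z. f (snd z)) \<longleftrightarrow> integrable \<nu> f"
    and "integral\<^sup>L \<gamma> (\<lambda>z. f (snd z)) = integral\<^sup>L \<nu> f"
proof -
  have m: "fst \<in> borel_measurable \<gamma>" "snd \<in> borel_measurable \<gamma>"
    by (rule coupling_measurable[OF c]; measurable)+
  show "integrable \<gamma> (\<lambda>z. f (fst z)) \<longleftrightarrow> integrable \<eta> f"
    "integral\<^sup>L \<gamma> (\<lambda>z. f (fst z)) = integral\<^sup>L \<eta> f"
    using integrable_distr_eq[OF m(1) f] integral_distr[OF m(1) f] couplingD(3)[OF c] by simp_all
  show "integrable \<gamma> (\<lambda>z. f (snd z)) \<longleftrightarrow> integrable \<nu> f"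
    "integral\<^sup>L \<gamma> (\<lambda>z. f (snd z)) = integral\<^sup>L \<nu> f"
    using integrable_distr_eq[OF m(2) f] integral_distr[OF m(2) f] couplingD(4)[OF c] by simp_all
qed

abbreviation cost :: "(real \<times> real) measure \<Rightarrow> real" where
  "cost \<gamma> \<equiv> integral\<^sup>L \<gamma> (\<lambda>z. (fst z - snd z)\<^sup>2)"

text \<open>If  2 Q \<le> a S + T / a  for every a > 0, then  Q \<le> sqrt S * sqrt T  (optimise over a;
  the degenerate cases S = 0 or T = 0 are handled by letting a tend to infinity or zero).\<close>
lemma le_sqrt_mult_if_weighted_amgm:
  fixes S T Q :: real
  assumes S: "S \<ge> 0" and T: "T \<ge> 0" and H: "\<And>a. a > 0 \<Longrightarrow> 2 * Q \<le> a * S + T / a"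
  shows "Q \<le> sqrt S * sqrt T"
proof (cases "S > 0 \<and> T > 0")
  case True
  have "2 * Q \<le> (sqrt T / sqrt S) * S + T / (sqrt T / sqrt S)"
    using True by (intro H) simp
  also have "\<dots> = 2 * (sqrt S * sqrt T)"
    using True by (simp add: field_simps)
  finally show ?thesis by simp
next
  case False
  have "2 * Q \<le> e" if e: "e > 0" for e
  proof (cases "S = 0")
    case True
    have "2 * Q \<le> ((T + 1) / e) * S + T / ((T + 1) / e)"
      using e T by (intro H) simp
    also have "\<dots> = e * (T / (T + 1))"
      using True T by (simp add: field_simps)
    also have "\<dots> \<le> e * 1"
      using e T by (intro mult_left_mono) simp_all
    finally show ?thesis by simp
  next
    case False
    with \<open>\<not> (S > 0 \<and> T > 0)\<close> S T have T0: "T = 0" by simp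
    have "2 * Q \<le> (e / (S + 1)) * S + T / (e / (S + 1))"
      using e S by (intro H) simp
    also have "\<dots> = e * (S / (S + 1))"
      using T0 by simp
    also have "\<dots> \<le> e * 1"
      using e S by (intro mult_left_mono) simp_all
    finally show ?thesis by simp
  qed
  then have "2 * Q \<le> 0"
    using field_le_epsilon[of "2 * Q" 0] by simp
  moreover have "0 \<le> sqrt S * sqrt T" using S T by simp
  ultimately show ?thesis by linarith
qed

text \<open>A coupling of two measures with finite second moments: every quadratic polynomial
  in the two coordinates is integrable, and its integral is determined by the five moments
  below.\<close>
locale U2_coupling =
  fixes \<eta> \<nu> :: "real measure" and \<gamma> :: "(real \<times> real) measure"
  assumes U2_fst: "U2 \<eta>" and U2_snd: "U2 \<nu>" and coupling: "\<gamma> \<in> couplings \<eta> \<nu>"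
begin

sublocale prob_space \<gamma>
  using couplingD(1)[OF coupling] .

abbreviation "A \<equiv> integral\<^sup>L \<gamma> (\<lambda>z. (fst z)\<^sup>2)"
abbreviation "B \<equiv> integral\<^sup>L \<gamma> fst"
abbreviation "C \<equiv> integral\<^sup>L \<gamma> (\<lambda>z. (snd z)\<^sup>2)"
abbreviation "D \<equiv> integral\<^sup>L \<gamma> snd"
abbreviation "K \<equiv> integral\<^sup>L \<gamma> (\<lambda>z. fst z * snd z)"

lemma quadratic_integral:
  assumes "\<And>z. f z = c0 + c1 * fst z + c2 * snd z + c3 * (fst z)\<^sup>2 + c4 * (snd z)\<^sup>2 + c5 * (fst z * snd z)"
  shows "integrable \<gamma> f" "integral\<^sup>L \<gamma> f = c0 + c1 * B + c2 * D + c3 * A + c4 * C + c5 * K"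
proof -
  have m: "fst \<in> borel_measurable \<gamma>" "snd \<in> borel_measurable \<gamma>"
    "(\<lambda>z. fst z * snd z) \<in> borel_measurable \<gamma>"
    by (rule coupling_measurable[OF coupling]; measurable)+
  have sq1: "integrable \<gamma> (\<lambda>z. (fst z)\<^sup>2)" and sq2: "integrable \<gamma> (\<lambda>z. (snd z)\<^sup>2)"
    using coupling_marginal_integral(1,3)[OF coupling, of "\<lambda>x. x\<^sup>2"] U2_fst U2_snd
    by (simp_all add: U2_def)
  have i1: "integrable \<gamma> fst" and i2: "integrable \<gamma> snd"
    using square_integrable_imp_integrable m(1,2) sq1 sq2 by auto
  have i3: "integrable \<gamma> (\<lambda>z. fst z * snd z)"
  proof (rule Bochner_Integration.integrable_bound[OF _ m(3)])
    show "integrable \<gamma> (\<lambda>z. (fst z)\<^sup>2 + (snd z)\<^sup>2)" using sq1 sq2 by simp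
    have "\<bar>x * y\<bar> \<le> x\<^sup>2 + y\<^sup>2" for x y :: real
      using sum_squares_bound[of "\<bar>x\<bar>" "\<bar>y\<bar>"] abs_mult[of x y]
      by (simp add: power2_eq_square)
    then show "AE z in \<gamma>. norm (fst z * snd z) \<le> norm ((fst z)\<^sup>2 + (snd z)\<^sup>2)"
      by (intro AE_I2) simp
  qed
  have "f = (\<lambda>z. c0 + c1 * fst z + c2 * snd z + c3 * (fst z)\<^sup>2 + c4 * (snd z)\<^sup>2 + c5 * (fst z * snd z))"
    using assms by auto
  then show "integrable \<gamma> f" "integral\<^sup>L \<gamma> f = c0 + c1 * B + c2 * D + c3 * A + c4 * C + c5 * K"
    using sq1 sq2 i1 i2 i3 by (simp_all add: prob_space)
qed

lemma mean_fst: "mean_of \<eta> = B" and mean_snd: "mean_of \<nu> = D"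
  using coupling_marginal_integral(2,4)[OF coupling, of "\<lambda>x. x"] by (simp_all add: mean_of_def)

lemma var_fst: "var_of \<eta> = A - B\<^sup>2"
proof -
  have "var_of \<eta> = integral\<^sup>L \<gamma> (\<lambda>z. (fst z - B)\<^sup>2)"
    using coupling_marginal_integral(2)[OF coupling, of "\<lambda>x. (x - B)\<^sup>2"]
    by (simp add: var_of_def mean_fst)
  also have "\<dots> = B\<^sup>2 + (-2 * B) * B + 0 * D + 1 * A + 0 * C + 0 * K"
    by (rule quadratic_integral) (simp add: power2_eq_square algebra_simps)
  finally show ?thesis by (simp add: power2_eq_square)
qed

lemma var_snd: "var_of \<nu> = C - D\<^sup>2"
proof -
  have "var_of \<nu> = integral\<^sup>L \<gamma> (\<lambda>z. (snd z - D)\<^sup>2)"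
    using coupling_marginal_integral(4)[OF coupling, of "\<lambda>x. (x - D)\<^sup>2"]
    by (simp add: var_of_def mean_snd)
  also have "\<dots> = D\<^sup>2 + 0 * B + (-2 * D) * D + 0 * A + 1 * C + 0 * K"
    by (rule quadratic_integral) (simp add: power2_eq_square algebra_simps)
  finally show ?thesis by (simp add: power2_eq_square)
qed

lemma cost_eq:
  shows "integrable \<gamma> (\<lambda>z. (fst z - snd z)\<^sup>2)" and "cost \<gamma> = A + C - 2 * K"
proof -
  have e: "\<And>z. (fst z - snd z)\<^sup>2 = 0 + 0 * fst z + 0 * snd z + 1 * (fst z)\<^sup>2 + 1 * (snd z)\<^sup>2
      + (-2 :: real) * (fst z * snd z)"
    by (simp add: power2_eq_square algebra_simps)
  show "integrable \<gamma> (\<lambda>z. (fst z - snd z)\<^sup>2)" "cost \<gamma> = A + C - 2 * K"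
    using quadratic_integral[OF e] by simp_all
qed

text \<open>Covariance bound: the covariance of a coupling is at most the product of the standard
  deviations of its marginals.  Proved from  2 cov \<le> a var_1 + var_2 / a  for all a > 0.\<close>
lemma covariance_le: "K - B * D \<le> sqrt (var_of \<eta>) * sqrt (var_of \<nu>)"
proof -
  have amgm: "2 * (K - B * D) \<le> a * var_of \<eta> + var_of \<nu> / a" if a: "a > 0" for a
  proof -
    have e1: "\<And>z. 2 * ((fst z - B) * (snd z - D)) = 2 * B * D + (-2 * D) * fst z + (-2 * B) * snd z
        + 0 * (fst z)\<^sup>2 + 0 * (snd z)\<^sup>2 + 2 * (fst z * snd z)"
      by (simp add: power2_eq_square algebra_simps)
    have e2: "\<And>z. a * (fst z - B)\<^sup>2 + (snd z - D)\<^sup>2 / a = (a * B\<^sup>2 + D\<^sup>2 / a) + (-2 * a * B) * fst z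
        + (-2 * D / a) * snd z + a * (fst z)\<^sup>2 + (1 / a) * (snd z)\<^sup>2 + 0 * (fst z * snd z)"
      using a by (simp add: power2_eq_square field_simps)
    have pointwise: "2 * ((x - B) * (y - D)) \<le> a * (x - B)\<^sup>2 + (y - D)\<^sup>2 / a" for x y
    proof -
      have "0 \<le> (a * (x - B) - (y - D))\<^sup>2 / a" using a by simp
      also have "\<dots> = a * (x - B)\<^sup>2 + (y - D)\<^sup>2 / a - 2 * ((x - B) * (y - D))"
        using a by (simp add: power2_eq_square field_simps)
      finally show ?thesis by simp
    qed
    have "2 * (K - B * D) = integral\<^sup>L \<gamma> (\<lambda>z. 2 * ((fst z - B) * (snd z - D)))"
      using quadratic_integral(2)[OF e1] by (simp add: algebra_simps)
    also have "\<dots> \<le> integral\<^sup>L \<gamma> (\<lambda>z. a * (fst z - B)\<^sup>2 + (snd z - D)\<^sup>2 / a)"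
      using quadratic_integral(1)[OF e1] quadratic_integral(1)[OF e2] pointwise
      by (intro integral_mono) auto
    also have "\<dots> = (a * B\<^sup>2 + D\<^sup>2 / a) + (-2 * a * B) * B + (-2 * D / a) * D + a * A + (1 / a) * C + 0 * K"
      by (rule quadratic_integral(2)[OF e2])
    also have "\<dots> = a * var_of \<eta> + var_of \<nu> / a"
      using a by (simp add: var_fst var_snd power2_eq_square field_simps)
    finally show ?thesis .
  qed
  show ?thesis
    by (rule le_sqrt_mult_if_weighted_amgm[OF var_of_nonneg var_of_nonneg amgm])
qed

lemma gelbrich_le_cost: "gelbrich \<eta> \<nu> \<le> cost \<gamma>"
proof -
  have "(sqrt (var_of \<eta>) - sqrt (var_of \<nu>))\<^sup>2 = var_of \<eta> + var_of \<nu> - 2 * (sqrt (var_of \<eta>) * sqrt (var_of \<nu>))"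
    using var_of_nonneg[of \<eta>] var_of_nonneg[of \<nu>] by (simp add: power2_eq_square algebra_simps)
  moreover have "(mean_of \<eta> - mean_of \<nu>)\<^sup>2 = B\<^sup>2 - 2 * (B * D) + D\<^sup>2"
    by (simp add: mean_fst mean_snd power2_eq_square algebra_simps)
  ultimately show ?thesis
    using covariance_le cost_eq(2) var_fst var_snd unfolding gelbrich_def by linarith
qed

end

section \<open>The 2-Wasserstein distance on U2\<close>

text \<open>The independent coupling shows that the infimal transport cost is finite on U2.\<close>
lemma product_coupling:
  assumes "U2 \<eta>" "U2 \<nu>"
  shows "\<eta> \<Otimes>\<^sub>M \<nu> \<in> couplings \<eta> \<nu>"
proof -
  have s1: "sets \<eta> = sets borel" and s2: "sets \<nu> = sets borel"
    using assms by (auto simp: U2_def)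
  interpret P: pair_prob_space \<eta> \<nu>
    using assms by (simp add: U2_def pair_prob_space_def pair_sigma_finite_def prob_space_imp_sigma_finite)
  have "sets (\<eta> \<Otimes>\<^sub>M \<nu>) = sets (borel \<Otimes>\<^sub>M borel :: (real \<times> real) measure)"
    using sets_pair_measure_cong[OF s1 s2] .
  then have sets: "sets (\<eta> \<Otimes>\<^sub>M \<nu>) = sets (borel :: (real \<times> real) measure)"
    by (simp only: borel_prod)
  have "distr (\<eta> \<Otimes>\<^sub>M \<nu>) borel fst = distr (\<eta> \<Otimes>\<^sub>M \<nu>) \<eta> fst"
    by (rule distr_cong) (simp_all add: s1)
  also have "\<dots> = \<eta>" by (rule P.M2.distr_pair_fst)
  finally have fst: "distr (\<eta> \<Otimes>\<^sub>M \<nu>) borel fst = \<eta>" .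
  have "distr (\<eta> \<Otimes>\<^sub>M \<nu>) borel snd = distr (distr (\<eta> \<Otimes>\<^sub>M \<nu>) (\<nu> \<Otimes>\<^sub>M \<eta>) (\<lambda>(x, y). (y, x))) \<nu> fst"
    by (subst distr_distr) (auto simp: comp_def s2 intro!: distr_cong)
  also have "\<dots> = \<nu>"
  proof -
    interpret Q: pair_prob_space \<nu> \<eta>
      using assms by (simp add: U2_def pair_prob_space_def pair_sigma_finite_def prob_space_imp_sigma_finite)
    show ?thesis by (simp add: Q.distr_pair_swap[symmetric] P.M1.distr_pair_fst)
  qed
  finally have snd: "distr (\<eta> \<Otimes>\<^sub>M \<nu>) borel snd = \<nu>" .
  show ?thesis
    unfolding couplings_def using sets fst snd P.prob_space_axioms by auto
qed

abbreviation transport_inf :: "real measure \<Rightarrow> real measure \<Rightarrow> ennreal" where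
  "transport_inf \<eta> \<nu> \<equiv> (INF \<gamma> \<in> couplings \<eta> \<nu>. \<integral>\<^sup>+ z. ennreal ((fst z - snd z)\<^sup>2) \<partial>\<gamma>)"

lemma (in U2_coupling) nn_integral_cost:
  "(\<integral>\<^sup>+ z. ennreal ((fst z - snd z)\<^sup>2) \<partial>\<gamma>) = ennreal (cost \<gamma>)"
  by (rule nn_integral_eq_integral[OF cost_eq(1)]) auto

lemma transport_inf_finite:
  assumes "U2 \<eta>" "U2 \<nu>"
  shows "transport_inf \<eta> \<nu> < top"
proof -
  interpret U2_coupling \<eta> \<nu> "\<eta> \<Otimes>\<^sub>M \<nu>"
    using assms product_coupling[OF assms] by unfold_locales
  have "transport_inf \<eta> \<nu> \<le> ennreal (cost (\<eta> \<Otimes>\<^sub>M \<nu>))"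
    unfolding nn_integral_cost[symmetric] by (rule INF_lower[OF coupling])
  also have "\<dots> < top" by simp
  finally show ?thesis .
qed

lemma W2_nonneg: "W2 \<eta> \<nu> \<ge> 0"
  unfolding W2_def by simp

lemma W2_sq: "(W2 \<eta> \<nu>)\<^sup>2 = enn2real (transport_inf \<eta> \<nu>)"
  unfolding W2_def by simp

lemma gelbrich_le_W2:
  assumes "U2 \<eta>" "U2 \<nu>"
  shows "gelbrich \<eta> \<nu> \<le> (W2 \<eta> \<nu>)\<^sup>2"
proof -
  have "ennreal (gelbrich \<eta> \<nu>) \<le> transport_inf \<eta> \<nu>"
  proof (rule INF_greatest)
    fix \<gamma> assume "\<gamma> \<in> couplings \<eta> \<nu>"
    then interpret U2_coupling \<eta> \<nu> \<gamma> using assms by unfold_locales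
    show "ennreal (gelbrich \<eta> \<nu>) \<le> (\<integral>\<^sup>+ z. ennreal ((fst z - snd z)\<^sup>2) \<partial>\<gamma>)"
      unfolding nn_integral_cost using gelbrich_le_cost by (rule ennreal_leI)
  qed
  then have "enn2real (ennreal (gelbrich \<eta> \<nu>)) \<le> enn2real (transport_inf \<eta> \<nu>)"
    by (rule enn2real_mono) (rule transport_inf_finite[OF assms])
  moreover have "enn2real (ennreal (gelbrich \<eta> \<nu>)) = gelbrich \<eta> \<nu>"
    by (rule enn2real_ennreal) (simp add: gelbrich_def)
  ultimately show ?thesis by (simp only: W2_sq)
qed

lemma W2_le_cost:
  assumes "U2 \<eta>" "U2 \<nu>" "\<gamma> \<in> couplings \<eta> \<nu>"
  shows "(W2 \<eta> \<nu>)\<^sup>2 \<le> cost \<gamma>"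
proof -
  interpret U2_coupling \<eta> \<nu> \<gamma> using assms by unfold_locales
  have "transport_inf \<eta> \<nu> \<le> ennreal (cost \<gamma>)"
    unfolding nn_integral_cost[symmetric] by (rule INF_lower[OF coupling])
  then have "enn2real (transport_inf \<eta> \<nu>) \<le> enn2real (ennreal (cost \<gamma>))"
    by (rule enn2real_mono) simp
  then show ?thesis by (simp add: W2_sq)
qed

lemma W2_near_optimal_coupling:
  assumes "U2 \<eta>" "U2 \<nu>" "\<epsilon> > 0"
  obtains \<gamma> where "\<gamma> \<in> couplings \<eta> \<nu>" "cost \<gamma> < (W2 \<eta> \<nu>)\<^sup>2 + \<epsilon>"
proof -
  have "transport_inf \<eta> \<nu> = ennreal (enn2real (transport_inf \<eta> \<nu>))"
    using transport_inf_finite[OF assms(1,2)] by simp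
  also have "\<dots> < ennreal ((W2 \<eta> \<nu>)\<^sup>2 + \<epsilon>)"
    using assms(3) by (intro ennreal_lessI) (auto simp: W2_sq add_nonneg_pos)
  finally obtain \<gamma> where c: "\<gamma> \<in> couplings \<eta> \<nu>"
    and lt: "(\<integral>\<^sup>+ z. ennreal ((fst z - snd z)\<^sup>2) \<partial>\<gamma>) < ennreal ((W2 \<eta> \<nu>)\<^sup>2 + \<epsilon>)"
    by (auto simp: INF_less_iff)
  interpret U2_coupling \<eta> \<nu> \<gamma> using assms c by unfold_locales
  have "cost \<gamma> < (W2 \<eta> \<nu>)\<^sup>2 + \<epsilon>"
    using lt by (simp add: nn_integral_cost ennreal_less_iff)
  with c show ?thesis by (rule that)
qed

section \<open>W2 between Gaussians, and rigidity of the Gelbrich bound\<close>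

text \<open>The monotone affine map  x \<mapsto> b + (\<beta>/\<alpha>)(x - a)  couples N(a, \<alpha>^2) with N(b, \<beta>^2) at cost
  equal to the Gelbrich bound, which is therefore the exact value of W2.\<close>
lemma W2_gaussian:
  assumes a: "\<alpha> > 0" and b: "\<beta> > 0"
  shows "(W2 (gaussian pa (\<alpha>\<^sup>2)) (gaussian pb (\<beta>\<^sup>2)))\<^sup>2 = (pa - pb)\<^sup>2 + (\<alpha> - \<beta>)\<^sup>2"
proof (rule antisym)
  let ?Ga = "gaussian pa (\<alpha>\<^sup>2)" and ?Gb = "gaussian pb (\<beta>\<^sup>2)"
  define k where "k = \<beta> / \<alpha>"
  have k: "k > 0" and k\<alpha>: "k * \<alpha> = \<beta>" using a b by (simp_all add: k_def)
  define f where "f = (\<lambda>x::real. (x, pb + k * (x - pa)))"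
  define \<gamma> where "\<gamma> = distr ?Ga borel f"
  interpret Pa: prob_space ?Ga using prob_space_gaussian[OF a] .
  have f[measurable]: "f \<in> borel_measurable borel" unfolding f_def by measurable
  have f': "f \<in> measurable ?Ga borel"
    by (simp add: measurable_cong_sets[OF gaussian_sets refl])
  have "distr \<gamma> borel fst = distr ?Ga borel (fst \<circ> f)"
    and "distr \<gamma> borel snd = distr ?Ga borel (snd \<circ> f)"
    unfolding \<gamma>_def by (simp_all add: distr_distr[OF _ f'])
  moreover have "fst \<circ> f = (\<lambda>x. x)" and "snd \<circ> f = (\<lambda>x. pb + k * (x - pa))"
    by (auto simp: f_def)
  ultimately have c: "\<gamma> \<in> couplings ?Ga ?Gb"
    unfolding couplings_def using gaussian_affine[OF a k] k\<alpha> Pa.prob_space_distr[OF f']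
    by (simp add: \<gamma>_def distr_id2)
  have "(W2 ?Ga ?Gb)\<^sup>2 \<le> cost \<gamma>"
    by (rule W2_le_cost[OF U2_gaussian[OF a] U2_gaussian[OF b] c])
  also have "cost \<gamma> = integral\<^sup>L ?Ga (\<lambda>x. (x - (pb + k * (x - pa)))\<^sup>2)"
    unfolding \<gamma>_def by (subst integral_distr[OF f']) (simp_all add: f_def)
  also have "\<dots> = integral\<^sup>L ?Ga (\<lambda>x. (1 - k)\<^sup>2 * (x - pa)\<^sup>2 + (2 * (1 - k) * (pa - pb)) * x
                     + ((pa - pb)\<^sup>2 - 2 * (1 - k) * (pa - pb) * pa))"
    by (rule Bochner_Integration.integral_cong) (simp_all add: power2_eq_square algebra_simps)
  also have "\<dots> = (1 - k)\<^sup>2 * \<alpha>\<^sup>2 + (pa - pb)\<^sup>2"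
    using gaussian_central_moment[OF a, of pa] gaussian_first_moment[OF a, of pa] Pa.prob_space
    by (simp add: algebra_simps)
  also have "(1 - k)\<^sup>2 * \<alpha>\<^sup>2 = (\<alpha> - \<beta>)\<^sup>2"
    using a by (simp add: k_def power2_eq_square field_simps)
  finally show "(W2 ?Ga ?Gb)\<^sup>2 \<le> (pa - pb)\<^sup>2 + (\<alpha> - \<beta>)\<^sup>2" by simp
  show "(pa - pb)\<^sup>2 + (\<alpha> - \<beta>)\<^sup>2 \<le> (W2 ?Ga ?Gb)\<^sup>2"
    using gelbrich_le_W2[OF U2_gaussian[OF a] U2_gaussian[OF b]] by (simp add: gelbrich_gaussian a b)
qed

lemma W2_gaussian_le:
  assumes "\<alpha> > 0" "\<beta> > 0"
  shows "W2 (gaussian pa (\<alpha>\<^sup>2)) (gaussian pb (\<beta>\<^sup>2)) \<le> \<bar>pa - pb\<bar> + \<bar>\<alpha> - \<beta>\<bar>"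
proof -
  have "W2 (gaussian pa (\<alpha>\<^sup>2)) (gaussian pb (\<beta>\<^sup>2)) = sqrt ((pa - pb)\<^sup>2 + (\<alpha> - \<beta>)\<^sup>2)"
    using W2_gaussian[OF assms] W2_nonneg by (metis real_sqrt_unique)
  then show ?thesis by (simp add: sqrt_sum_squares_le_sum_abs)
qed

lemma iexp_dist_le: "cmod (iexp a - iexp b) \<le> \<bar>a - b\<bar>"
proof -
  have "iexp a - iexp b = iexp b * (iexp (a - b) - 1)"
    by (simp add: algebra_simps exp_add[symmetric])
  then have "cmod (iexp a - iexp b) = cmod (iexp (a - b) - 1)"
    by (simp add: norm_mult)
  also have "\<dots> \<le> \<bar>a - b\<bar>" using iexp_approx1[of "a - b" 0] by simp
  finally show ?thesis .
qed

lemma (in prob_space) char_distr_diff_le: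
  assumes X[measurable]: "X \<in> borel_measurable M" and Y[measurable]: "Y \<in> borel_measurable M"
    and XY: "integrable M (\<lambda>z. (X z - Y z)\<^sup>2)" and \<delta>: "\<delta> > 0"
  shows "cmod (char (distr M borel X) t - char (distr M borel Y) t)
           \<le> t\<^sup>2 / (2 * \<delta>) * (\<integral>z. (X z - Y z)\<^sup>2 \<partial>M) + \<delta> / 2"
proof -
  have char: "char (distr M borel Z) t = (CLINT z|M. iexp (t * Z z))"
    if "Z \<in> borel_measurable M" for Z :: "'a \<Rightarrow> real"
    unfolding char_def using integral_distr[OF that, of "\<lambda>x. iexp (t * x)"] by simp
  have int: "integrable M (\<lambda>z. iexp (t * Z z))" if "Z \<in> borel_measurable M" for Z :: "'a \<Rightarrow> real"
    by (rule integrable_const_bound[where B=1])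
       (use that in \<open>simp_all add: norm_exp_i_times[of "t * Z _", simplified]\<close>)
  have pointwise: "cmod (iexp (t * X z) - iexp (t * Y z)) \<le> t\<^sup>2 / (2 * \<delta>) * (X z - Y z)\<^sup>2 + \<delta> / 2" for z
  proof -
    have "cmod (iexp (t * X z) - iexp (t * Y z)) \<le> \<bar>t * (X z - Y z)\<bar>"
      using iexp_dist_le[of "t * X z" "t * Y z"] by (simp add: algebra_simps)
    also have "\<dots> \<le> t\<^sup>2 / (2 * \<delta>) * (X z - Y z)\<^sup>2 + \<delta> / 2"
    proof -
      have "2 * \<delta> * \<bar>t * (X z - Y z)\<bar> \<le> \<bar>t * (X z - Y z)\<bar>\<^sup>2 + \<delta>\<^sup>2"
        using sum_squares_bound[of "\<bar>t * (X z - Y z)\<bar>" \<delta>] by (simp add: algebra_simps)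
      then show ?thesis using \<delta> by (simp add: field_simps power2_eq_square)
    qed
    finally show ?thesis .
  qed
  have "cmod (char (distr M borel X) t - char (distr M borel Y) t)
        = cmod (CLINT z|M. iexp (t * X z) - iexp (t * Y z))"
    using int[OF X] int[OF Y] by (simp add: char[OF X] char[OF Y])
  also have "\<dots> \<le> (\<integral>z. cmod (iexp (t * X z) - iexp (t * Y z)) \<partial>M)"
    by (rule integral_norm_bound)
  also have "\<dots> \<le> (\<integral>z. t\<^sup>2 / (2 * \<delta>) * (X z - Y z)\<^sup>2 + \<delta> / 2 \<partial>M)"
    using int[OF X] int[OF Y] XY pointwise by (intro integral_mono) auto
  also have "\<dots> = t\<^sup>2 / (2 * \<delta>) * (\<integral>z. (X z - Y z)\<^sup>2 \<partial>M) + \<delta> / 2"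
    using XY prob_space by simp
  finally show ?thesis .
qed

lemma (in U2_coupling) affine_transport_gap:
  assumes v: "var_of \<nu> > 0"
  defines "k \<equiv> sqrt (var_of \<eta>) / sqrt (var_of \<nu>)"
  shows "integrable \<gamma> (\<lambda>z. (fst z - (mean_of \<eta> + k * (snd z - mean_of \<nu>)))\<^sup>2)"
    and "integral\<^sup>L \<gamma> (\<lambda>z. (fst z - (mean_of \<eta> + k * (snd z - mean_of \<nu>)))\<^sup>2)
           = k * (cost \<gamma> - gelbrich \<eta> \<nu>)"
proof -
  let ?m = "mean_of \<eta>" and ?p = "mean_of \<nu>"
  have ksd: "k * sqrt (var_of \<nu>) = sqrt (var_of \<eta>)" using v by (simp add: k_def)
  have A: "A = (sqrt (var_of \<eta>))\<^sup>2 + ?m\<^sup>2" and C: "C = (sqrt (var_of \<nu>))\<^sup>2 + ?p\<^sup>2"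
    using var_fst var_snd mean_fst mean_snd var_of_nonneg[of \<eta>] var_of_nonneg[of \<nu>] by simp_all
  have e: "\<And>z. (fst z - (?m + k * (snd z - ?p)))\<^sup>2 = (k * ?p - ?m)\<^sup>2 + (2 * (k * ?p - ?m)) * fst z
      + (- 2 * k * (k * ?p - ?m)) * snd z + 1 * (fst z)\<^sup>2 + k\<^sup>2 * (snd z)\<^sup>2 + (- 2 * k) * (fst z * snd z)"
    by (simp add: power2_eq_square algebra_simps)
  show "integrable \<gamma> (\<lambda>z. (fst z - (?m + k * (snd z - ?p)))\<^sup>2)"
    by (rule quadratic_integral(1)[OF e])
  have "integral\<^sup>L \<gamma> (\<lambda>z. (fst z - (?m + k * (snd z - ?p)))\<^sup>2) = (k * ?p - ?m)\<^sup>2 + (2 * (k * ?p - ?m)) * B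
      + (- 2 * k * (k * ?p - ?m)) * D + 1 * A + k\<^sup>2 * C + (- 2 * k) * K"
    by (rule quadratic_integral(2)[OF e])
  also have "\<dots> = k * (cost \<gamma> - gelbrich \<eta> \<nu>)"
    unfolding cost_eq(2) A C gelbrich_def mean_fst[symmetric] mean_snd[symmetric] ksd[symmetric]
    by (simp add: power2_eq_square algebra_simps)
  finally show "integral\<^sup>L \<gamma> (\<lambda>z. (fst z - (?m + k * (snd z - ?p)))\<^sup>2) = k * (cost \<gamma> - gelbrich \<eta> \<nu>)" .
qed

text \<open>If a measure attains the Gelbrich bound against a nondegenerate \<nu>, then near-optimal
  couplings show that its characteristic function is arbitrarily close to that of the affine
  image of \<nu> with matching mean and standard deviation.\<close>
lemma char_close_affine_image:
  assumes U: "U2 \<eta>" "U2 \<nu>" and v: "var_of \<nu> > 0" and W: "(W2 \<eta> \<nu>)\<^sup>2 \<le> gelbrich \<eta> \<nu>"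
    and \<delta>: "\<delta> > 0" and \<epsilon>: "\<epsilon> > 0"
  defines "k \<equiv> sqrt (var_of \<eta>) / sqrt (var_of \<nu>)"
  shows "cmod (char \<eta> t - char (distr \<nu> borel (\<lambda>y. mean_of \<eta> + k * (y - mean_of \<nu>))) t)
           \<le> t\<^sup>2 / (2 * \<delta>) * k * \<epsilon> + \<delta> / 2"
proof -
  define f where "f = (\<lambda>y. mean_of \<eta> + k * (y - mean_of \<nu>))"
  have k: "k \<ge> 0" unfolding k_def using var_of_nonneg by simp
  have f[measurable]: "f \<in> borel_measurable borel" unfolding f_def by measurable
  obtain \<gamma> where c: "\<gamma> \<in> couplings \<eta> \<nu>" and lt: "cost \<gamma> < (W2 \<eta> \<nu>)\<^sup>2 + \<epsilon>"
    using W2_near_optimal_coupling[OF U \<epsilon>] by blast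
  interpret U2_coupling \<eta> \<nu> \<gamma> using U c by unfold_locales
  have m: "fst \<in> borel_measurable \<gamma>" "(\<lambda>z. f (snd z)) \<in> borel_measurable \<gamma>"
    by (rule coupling_measurable[OF c]; measurable)+
  have fst: "distr \<gamma> borel fst = \<eta>" by (rule couplingD(3)[OF c])
  have snd: "distr \<gamma> borel (\<lambda>z. f (snd z)) = distr \<nu> borel f"
    using distr_distr[of f borel borel snd \<gamma>] coupling_measurable[OF c snd_borel] couplingD(4)[OF c]
    by (simp add: comp_def)
  have int: "integrable \<gamma> (\<lambda>z. (fst z - f (snd z))\<^sup>2)"
    using affine_transport_gap(1)[OF v] by (simp add: f_def k_def)
  have gap: "integral\<^sup>L \<gamma> (\<lambda>z. (fst z - f (snd z))\<^sup>2) \<le> k * \<epsilon>"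
    unfolding f_def affine_transport_gap(2)[OF v, folded k_def]
    using lt W k by (intro mult_left_mono) simp_all
  have "cmod (char \<eta> t - char (distr \<nu> borel f) t)
          \<le> t\<^sup>2 / (2 * \<delta>) * integral\<^sup>L \<gamma> (\<lambda>z. (fst z - f (snd z))\<^sup>2) + \<delta> / 2"
    using char_distr_diff_le[OF m int \<delta>, of t] by (simp only: fst snd)
  also have "\<dots> \<le> t\<^sup>2 / (2 * \<delta>) * (k * \<epsilon>) + \<delta> / 2"
    using gap \<delta> by (intro add_right_mono mult_left_mono) simp_all
  finally show ?thesis unfolding f_def by (simp add: mult.assoc)
qed

lemma nonpos_if_le_two_epsilons:
  fixes d :: real and c :: "real \<Rightarrow> real"
  assumes c: "\<And>\<delta>. \<delta> > 0 \<Longrightarrow> c \<delta> \<ge> 0"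
    and H: "\<And>\<delta> \<epsilon>. \<delta> > 0 \<Longrightarrow> \<epsilon> > 0 \<Longrightarrow> d \<le> c \<delta> * \<epsilon> + \<delta>"
  shows "d \<le> 0"
proof (rule field_le_epsilon)
  fix e :: real assume e: "e > 0"
  let ?c = "c (e / 2)"
  have pos: "?c \<ge> 0" using c e by simp
  have "d \<le> ?c * (e / 2 / (?c + 1)) + e / 2"
    using H[of "e / 2" "e / 2 / (?c + 1)"] e pos by (simp add: add_nonneg_pos)
  also have "?c * (e / 2 / (?c + 1)) \<le> e / 2"
    using e pos by (simp add: field_simps)
  finally show "d \<le> 0 + e" by simp
qed

text \<open>Rigidity: a measure attaining the Gelbrich bound against a nondegenerate \<nu> is the affine
  image of \<nu> with its own mean and standard deviation (Levy's uniqueness theorem).\<close>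
lemma gelbrich_attained_affine:
  assumes U: "U2 \<eta>" "U2 \<nu>" and v: "var_of \<nu> > 0" and W: "(W2 \<eta> \<nu>)\<^sup>2 \<le> gelbrich \<eta> \<nu>"
  defines "k \<equiv> sqrt (var_of \<eta>) / sqrt (var_of \<nu>)"
  shows "\<eta> = distr \<nu> borel (\<lambda>y. mean_of \<eta> + k * (y - mean_of \<nu>))"
proof -
  define f where "f = (\<lambda>y. mean_of \<eta> + k * (y - mean_of \<nu>))"
  have k: "k \<ge> 0" unfolding k_def using var_of_nonneg by simp
  have "char \<eta> = char (distr \<nu> borel f)"
  proof
    fix t
    have "cmod (char \<eta> t - char (distr \<nu> borel f) t) \<le> 0"
    proof (rule nonpos_if_le_two_epsilons[where c = "\<lambda>\<delta>. t\<^sup>2 / (2 * \<delta>) * k"])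
      fix \<delta> \<epsilon> :: real assume "\<delta> > 0" "\<epsilon> > 0"
      then show "cmod (char \<eta> t - char (distr \<nu> borel f) t) \<le> t\<^sup>2 / (2 * \<delta>) * k * \<epsilon> + \<delta>"
        using char_close_affine_image[OF U v W, of \<delta> \<epsilon> t] unfolding f_def k_def by simp
    qed (use k in simp)
    then show "char \<eta> t = char (distr \<nu> borel f) t" by simp
  qed
  moreover have "real_distribution \<eta>"
    using U by (simp add: U2_def real_distribution_def real_distribution_axioms_def)
  moreover have "real_distribution (distr \<nu> borel f)"
  proof -
    have f: "f \<in> measurable \<nu> borel"
      using measurable_cong_sets[of \<nu> borel borel borel] U(2) by (auto simp: U2_def f_def)
    then show ?thesis
      using U(2) prob_space.prob_space_distr[OF _ f]
      by (simp add: U2_def real_distribution_def real_distribution_axioms_def)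
  qed
  ultimately show ?thesis
    unfolding f_def[symmetric] by (simp add: Levy_uniqueness)
qed

lemma gelbrich_attained_gaussian:
  assumes U: "U2 \<eta>" and \<sigma>: "\<sigma> > 0" and v: "var_of \<eta> > 0"
    and W: "(W2 \<eta> (gaussian p (\<sigma>\<^sup>2)))\<^sup>2 \<le> gelbrich \<eta> (gaussian p (\<sigma>\<^sup>2))"
  shows "\<eta> = gaussian (mean_of \<eta>) (var_of \<eta>)"
proof -
  define k where "k = sqrt (var_of \<eta>) / \<sigma>"
  have k: "k > 0" and k\<sigma>: "(k * \<sigma>)\<^sup>2 = var_of \<eta>"
    using v \<sigma> by (simp_all add: k_def)
  have "\<eta> = distr (gaussian p (\<sigma>\<^sup>2)) borel (\<lambda>y. mean_of \<eta> + k * (y - p))"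
    using gelbrich_attained_affine[OF U U2_gaussian[OF \<sigma>] _ W] \<sigma>
    by (simp add: var_of_gaussian mean_of_gaussian k_def)
  also have "\<dots> = gaussian (mean_of \<eta>) (var_of \<eta>)"
    using gaussian_affine[OF \<sigma> k] k\<sigma> by simp
  finally show ?thesis .
qed

section \<open>Wasserstein barycenters of Gaussians\<close>

lemma weighted_sq_deviation:
  fixes wt a :: "'i \<Rightarrow> real"
  assumes "finite J" "(\<Sum>j\<in>J. wt j) = 1"
  shows "(\<Sum>j\<in>J. wt j * (x - a j)\<^sup>2)
           = (x - (\<Sum>j\<in>J. wt j * a j))\<^sup>2 + (\<Sum>j\<in>J. wt j * ((\<Sum>j\<in>J. wt j * a j) - a j)\<^sup>2)"
proof -
  define c where "c = (\<Sum>j\<in>J. wt j * a j)"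
  have "(\<Sum>j\<in>J. wt j * (x - a j)\<^sup>2) - (\<Sum>j\<in>J. wt j * (c - a j)\<^sup>2)
      = (\<Sum>j\<in>J. (x\<^sup>2 - c\<^sup>2) * wt j - 2 * (x - c) * (wt j * a j))"
    by (simp add: sum_subtractf[symmetric] power2_eq_square algebra_simps)
  also have "\<dots> = (x\<^sup>2 - c\<^sup>2) * (\<Sum>j\<in>J. wt j) - 2 * (x - c) * c"
    by (simp add: sum_subtractf sum_distrib_left[symmetric] c_def)
  also have "\<dots> = (x - c)\<^sup>2" using assms(2) by (simp add: power2_eq_square algebra_simps)
  finally show ?thesis by (simp add: c_def[symmetric])
qed

locale gaussian_barycenter =
  fixes J :: "'i set" and wt p \<sigma> :: "'i \<Rightarrow> real"
  assumes finite_J: "finite J" and wt_nonneg: "\<And>j. j \<in> J \<Longrightarrow> wt j \<ge> 0"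
    and wt_sum: "(\<Sum>j\<in>J. wt j) = 1" and \<sigma>_pos: "\<And>j. j \<in> J \<Longrightarrow> \<sigma> j > 0"
begin

abbreviation bary_cost :: "real measure \<Rightarrow> real" where
  "bary_cost \<eta> \<equiv> \<Sum>j\<in>J. wt j * (W2 \<eta> (gaussian (p j) ((\<sigma> j)\<^sup>2)))\<^sup>2"

abbreviation "p_bar \<equiv> \<Sum>j\<in>J. wt j * p j"
abbreviation "\<sigma>_bar \<equiv> \<Sum>j\<in>J. wt j * \<sigma> j"

abbreviation "cost_min \<equiv> \<Sum>j\<in>J. wt j * ((p_bar - p j)\<^sup>2 + (\<sigma>_bar - \<sigma> j)\<^sup>2)"

lemma positive_weight: obtains j0 where "j0 \<in> J" "wt j0 > 0"
proof -
  have "\<not> (\<forall>j\<in>J. wt j \<le> 0)"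
  proof
    assume "\<forall>j\<in>J. wt j \<le> 0"
    then have "(\<Sum>j\<in>J. wt j) \<le> 0" by (intro sum_nonpos) simp
    then show False using wt_sum by simp
  qed
  then show ?thesis using that by force
qed

lemma \<sigma>_bar_pos: "\<sigma>_bar > 0"
proof -
  obtain j0 where j0: "j0 \<in> J" "wt j0 > 0" by (rule positive_weight)
  have "wt j0 * \<sigma> j0 \<le> \<sigma>_bar"
    by (rule member_le_sum[OF j0(1) _ finite_J]) (simp add: wt_nonneg \<sigma>_pos less_imp_le)
  moreover have "wt j0 * \<sigma> j0 > 0" using j0 \<sigma>_pos by simp
  ultimately show ?thesis by simp
qed

lemma bary_cost_lower:
  assumes U: "U2 \<eta>"
  shows "(mean_of \<eta> - p_bar)\<^sup>2 + (sqrt (var_of \<eta>) - \<sigma>_bar)\<^sup>2 + cost_min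
           \<le> (\<Sum>j\<in>J. wt j * gelbrich \<eta> (gaussian (p j) ((\<sigma> j)\<^sup>2)))"
    and "(\<Sum>j\<in>J. wt j * gelbrich \<eta> (gaussian (p j) ((\<sigma> j)\<^sup>2))) \<le> bary_cost \<eta>"
proof -
  let ?m = "mean_of \<eta>" and ?s = "sqrt (var_of \<eta>)"
  have "(\<Sum>j\<in>J. wt j * gelbrich \<eta> (gaussian (p j) ((\<sigma> j)\<^sup>2)))
        = (\<Sum>j\<in>J. wt j * (?m - p j)\<^sup>2 + wt j * (?s - \<sigma> j)\<^sup>2)"
    by (rule sum.cong) (simp_all add: gelbrich_def mean_of_gaussian var_of_gaussian \<sigma>_pos
        less_imp_le distrib_left)
  also have "\<dots> = (\<Sum>j\<in>J. wt j * (?m - p j)\<^sup>2) + (\<Sum>j\<in>J. wt j * (?s - \<sigma> j)\<^sup>2)"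
    by (rule sum.distrib)
  also have "\<dots> = (?m - p_bar)\<^sup>2 + (?s - \<sigma>_bar)\<^sup>2 + cost_min"
    using weighted_sq_deviation[OF finite_J wt_sum, of ?m p]
      weighted_sq_deviation[OF finite_J wt_sum, of ?s \<sigma>]
    by (simp add: sum.distrib distrib_left)
  finally show "(?m - p_bar)\<^sup>2 + (?s - \<sigma>_bar)\<^sup>2 + cost_min
      \<le> (\<Sum>j\<in>J. wt j * gelbrich \<eta> (gaussian (p j) ((\<sigma> j)\<^sup>2)))" by simp
  show "(\<Sum>j\<in>J. wt j * gelbrich \<eta> (gaussian (p j) ((\<sigma> j)\<^sup>2))) \<le> bary_cost \<eta>"
    using gelbrich_le_W2[OF U U2_gaussian[OF \<sigma>_pos]] wt_nonneg
    by (intro sum_mono mult_left_mono) simp_all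
qed

lemma bary_cost_barycenter: "bary_cost (gaussian p_bar (\<sigma>_bar\<^sup>2)) = cost_min"
  by (intro sum.cong refl) (simp add: W2_gaussian \<sigma>_bar_pos \<sigma>_pos)

theorem barycenter_is_argmin: "is_argmin_U2 bary_cost (gaussian p_bar (\<sigma>_bar\<^sup>2))"
  unfolding is_argmin_U2_def
proof (intro conjI allI impI)
  show "U2 (gaussian p_bar (\<sigma>_bar\<^sup>2))" by (rule U2_gaussian[OF \<sigma>_bar_pos])
  fix \<xi> assume "U2 \<xi>"
  then show "bary_cost (gaussian p_bar (\<sigma>_bar\<^sup>2)) \<le> bary_cost \<xi>"
    using bary_cost_lower[of \<xi>] unfolding bary_cost_barycenter
    by (smt (verit) zero_le_power2)
qed

text \<open>Uniqueness: a minimiser matches mean and standard deviation of the barycenter and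
  attains every Gelbrich bound with positive weight, hence is Gaussian by rigidity.\<close>
theorem barycenter_unique:
  assumes "is_argmin_U2 bary_cost \<eta>"
  shows "\<eta> = gaussian p_bar (\<sigma>_bar\<^sup>2)"
proof -
  let ?G = "\<lambda>j. gaussian (p j) ((\<sigma> j)\<^sup>2)"
  have U: "U2 \<eta>" and le: "bary_cost \<eta> \<le> cost_min"
    using assms barycenter_is_argmin by (auto simp: is_argmin_U2_def bary_cost_barycenter)
  note lower = bary_cost_lower[OF U]
  have "(mean_of \<eta> - p_bar)\<^sup>2 + (sqrt (var_of \<eta>) - \<sigma>_bar)\<^sup>2 \<le> 0"
    using lower le by linarith
  then have mean: "mean_of \<eta> = p_bar" and sd: "sqrt (var_of \<eta>) = \<sigma>_bar"
    by (simp_all add: sum_power2_le_zero_iff)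
  have gap_nonneg: "0 \<le> wt j * ((W2 \<eta> (?G j))\<^sup>2 - gelbrich \<eta> (?G j))" if "j \<in> J" for j
    using gelbrich_le_W2[OF U U2_gaussian[OF \<sigma>_pos[OF that]]] wt_nonneg[OF that] by simp
  have "(\<Sum>j\<in>J. wt j * ((W2 \<eta> (?G j))\<^sup>2 - gelbrich \<eta> (?G j)))
        = bary_cost \<eta> - (\<Sum>j\<in>J. wt j * gelbrich \<eta> (?G j))"
    by (simp add: sum_subtractf right_diff_distrib)
  also have "\<dots> \<le> 0"
    using lower le mean sd by simp
  finally have gaps_zero: "\<forall>j\<in>J. wt j * ((W2 \<eta> (?G j))\<^sup>2 - gelbrich \<eta> (?G j)) = 0"
    using sum_nonneg_eq_0_iff[OF finite_J] gap_nonneg by (smt (verit) sum_nonneg)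
  obtain j0 where j0: "j0 \<in> J" "wt j0 > 0" by (rule positive_weight)
  have "(W2 \<eta> (?G j0))\<^sup>2 \<le> gelbrich \<eta> (?G j0)" using gaps_zero j0 by fastforce
  moreover have "var_of \<eta> > 0" using sd \<sigma>_bar_pos by (metis real_sqrt_gt_0_iff)
  ultimately have "\<eta> = gaussian (mean_of \<eta>) (var_of \<eta>)"
    by (intro gelbrich_attained_gaussian[OF U \<sigma>_pos[OF j0(1)]])
  also have "var_of \<eta> = \<sigma>_bar\<^sup>2"
    using sd var_of_nonneg[of \<eta>] by (metis real_sqrt_pow2)
  finally show ?thesis by (simp add: mean)
qed

end

section \<open>Linear averaging on a connected graph\<close>

lemma exponential_decay_of_periodic_contraction:
  fixes D :: "nat \<Rightarrow> real"
  assumes D_nonneg: "\<And>t. D t \<ge> 0" and D_antimono: "\<And>t t'. t \<le> t' \<Longrightarrow> D t' \<le> D t"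
    and contract: "\<And>t. D (t + K) \<le> (1 - \<delta>) * D t" and K: "K \<ge> 1" and \<delta>: "0 < \<delta>" "\<delta> < 1"
  shows "\<exists>C \<rho>. C > 0 \<and> 0 < \<rho> \<and> \<rho> < 1 \<and> (\<forall>t. D t \<le> C * \<rho> ^ t)"
proof -
  have geometric: "D (K * q) \<le> (1 - \<delta>) ^ q * D 0" for q
  proof (induction q)
    case (Suc q)
    have "D (K * Suc q) \<le> (1 - \<delta>) * D (K * q)"
      using contract[of "K * q"] by (simp add: algebra_simps)
    also have "\<dots> \<le> (1 - \<delta>) * ((1 - \<delta>) ^ q * D 0)"
      using Suc \<delta> by (intro mult_left_mono) auto
    finally show ?case by simp
  qed simp
  define \<rho> where "\<rho> = root K (1 - \<delta>)"
  define C where "C = D 0 / (1 - \<delta>) + 1"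
  have \<rho>: "0 < \<rho>" "\<rho> < 1" "\<rho> ^ K = 1 - \<delta>"
    using \<delta> K by (simp_all add: \<rho>_def real_root_pow_pos2)
  have C: "C > 0" using D_nonneg[of 0] \<delta> by (simp add: C_def add_nonneg_pos)
  have "D t \<le> C * \<rho> ^ t" for t
  proof -
    define q where "q = t div K"
    have t: "t = K * q + t mod K" by (simp add: q_def)
    have "\<rho> ^ (K * q) * (1 - \<delta>) = \<rho> ^ (K * q) * \<rho> ^ K" by (simp add: \<rho>)
    also have "\<dots> \<le> \<rho> ^ (K * q) * \<rho> ^ (t mod K)"
      using \<rho> K by (intro mult_left_mono power_decreasing) simp_all
    also have "\<dots> = \<rho> ^ t" by (subst (2) t) (simp add: power_add)
    finally have "(1 - \<delta>) ^ q \<le> \<rho> ^ t / (1 - \<delta>)"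
      using \<delta> by (simp add: power_mult \<rho> field_simps)
    have "D t \<le> D (K * q)" by (rule D_antimono) (simp add: q_def)
    also have "\<dots> \<le> (1 - \<delta>) ^ q * D 0" by (rule geometric)
    also have "\<dots> \<le> \<rho> ^ t / (1 - \<delta>) * D 0"
      using \<open>(1 - \<delta>) ^ q \<le> \<rho> ^ t / (1 - \<delta>)\<close> D_nonneg by (intro mult_right_mono) simp_all
    also have "\<dots> \<le> C * \<rho> ^ t"
      using \<rho> by (simp add: C_def algebra_simps)
    finally show ?thesis .
  qed
  then show ?thesis using C \<rho> by blast
qed

lemma exponential_decay_add:
  fixes a b :: "nat \<Rightarrow> real"
  assumes a: "C1 > 0" "0 < r1" "r1 < 1" "\<And>t. a t \<le> C1 * r1 ^ t"
    and b: "C2 > 0" "0 < r2" "r2 < 1" "\<And>t. b t \<le> C2 * r2 ^ t"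
  shows "\<exists>C \<rho>. C > 0 \<and> 0 < \<rho> \<and> \<rho> < 1 \<and> (\<forall>t. a t + b t \<le> C * \<rho> ^ t)"
proof (intro exI conjI allI)
  fix t
  let ?r = "max r1 r2"
  have "C1 * r1 ^ t \<le> C1 * ?r ^ t" and "C2 * r2 ^ t \<le> C2 * ?r ^ t"
    using a(1,2) b(1,2) by (intro mult_left_mono power_mono; simp)+
  then show "a t + b t \<le> (C1 + C2) * ?r ^ t"
    using a(4)[of t] b(4)[of t] by (simp add: algebra_simps)
qed (use a b in auto)

fun averaging :: "(nat \<Rightarrow> nat \<Rightarrow> real) \<Rightarrow> (nat \<times> nat) set \<Rightarrow> (nat \<Rightarrow> real) \<Rightarrow> nat \<Rightarrow> nat \<Rightarrow> real" where
  "averaging w E x0 0 i = x0 i"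
| "averaging w E x0 (Suc t) i = (\<Sum>j\<in>nbhd E i. w i j * averaging w E x0 t j)"

declare averaging.simps(2)[simp del]

locale averaging_network =
  fixes n :: nat and E :: "(nat \<times> nat) set" and w :: "nat \<Rightarrow> nat \<Rightarrow> real"
  assumes graph: "connected_undirected_graph n E"
    and weights: "adapted_doubly_stochastic n E w"
begin

lemma n_pos: "n \<ge> 1" using graph by (simp add: connected_undirected_graph_def)
lemma E_sub: "E \<subseteq> {..<n} \<times> {..<n}" using graph by (simp add: connected_undirected_graph_def)
lemma E_connected: "i < n \<Longrightarrow> j < n \<Longrightarrow> (i, j) \<in> E\<^sup>*"
  using graph by (simp add: connected_undirected_graph_def)
lemma nbhd_sub: "nbhd E i \<subseteq> {..<n}" using E_sub by (auto simp: nbhd_def)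

lemma w_pos_iff: "i < n \<Longrightarrow> j < n \<Longrightarrow> w i j > 0 \<longleftrightarrow> (i, j) \<in> E"
  using weights by (simp add: adapted_doubly_stochastic_def)
lemma w_zero: "i < n \<Longrightarrow> j < n \<Longrightarrow> (i, j) \<notin> E \<Longrightarrow> w i j = 0"
  using weights by (simp add: adapted_doubly_stochastic_def)
lemma w_nonneg: "i < n \<Longrightarrow> j < n \<Longrightarrow> w i j \<ge> 0"
  using w_pos_iff w_zero by (cases "(i, j) \<in> E") (auto intro: less_imp_le)
lemma w_diag_pos: "i < n \<Longrightarrow> w i i > 0"
  using weights unfolding adapted_doubly_stochastic_def by blast
lemma row_sum: "i < n \<Longrightarrow> (\<Sum>j<n. w i j) = 1"
  using weights by (simp add: adapted_doubly_stochastic_def)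
lemma col_sum: "j < n \<Longrightarrow> (\<Sum>i<n. w i j) = 1"
  using weights by (simp add: adapted_doubly_stochastic_def)

lemma sum_nbhd: "i < n \<Longrightarrow> (\<Sum>j\<in>nbhd E i. w i j * f j) = (\<Sum>j<n. w i j * f j)"
  by (rule sum.mono_neutral_left) (use nbhd_sub w_zero in \<open>auto simp: nbhd_def\<close>)

lemma nbhd_weights: "i < n \<Longrightarrow> (\<Sum>j\<in>nbhd E i. w i j) = 1"
  using sum_nbhd[where f = "\<lambda>_. 1"] row_sum by simp

lemma averaging_Suc: "i < n \<Longrightarrow> averaging w E x0 (Suc t) i = (\<Sum>j<n. w i j * averaging w E x0 t j)"
  by (simp add: sum_nbhd averaging.simps(2))

text \<open>Positivity is preserved, thanks to the positive self-weights.\<close>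
lemma averaging_pos:
  assumes "\<forall>i<n. x0 i > 0" and "i < n"
  shows "averaging w E x0 t i > 0"
  using assms(2)
proof (induction t arbitrary: i)
  case (Suc t)
  have "w i i * averaging w E x0 t i \<le> (\<Sum>j<n. w i j * averaging w E x0 t j)"
    by (rule member_le_sum) (use Suc w_nonneg in \<open>auto intro: mult_nonneg_nonneg less_imp_le\<close>)
  moreover have "w i i * averaging w E x0 t i > 0" using Suc w_diag_pos by simp
  ultimately show ?case by (simp add: averaging_Suc[OF Suc.prems])
qed (use assms(1) in simp)

end

text \<open>Its minimum is
  nondecreasing and its maximum nonincreasing; connectivity lets every vertex feel every
  other one after a bounded number of steps, which contracts the spread max - min.\<close>
locale averaging_run = averaging_network +
  fixes x0 :: "nat \<Rightarrow> real"
begin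

abbreviation x :: "nat \<Rightarrow> nat \<Rightarrow> real" where
  "x t i \<equiv> averaging w E x0 t i"

definition min_val :: "nat \<Rightarrow> real" where "min_val t = Min ((\<lambda>j. x t j) ` {..<n})"
definition max_val :: "nat \<Rightarrow> real" where "max_val t = Max ((\<lambda>j. x t j) ` {..<n})"

lemma vertices_nonempty: "{..<n} \<noteq> {}"
  using n_pos by (auto simp: lessThan_empty_iff)

lemma min_val_le: "i < n \<Longrightarrow> min_val t \<le> x t i"
  unfolding min_val_def by (rule Min_le) auto
lemma max_val_ge: "i < n \<Longrightarrow> x t i \<le> max_val t"
  unfolding max_val_def by (rule Max_ge) auto

lemma min_val_attained: obtains i where "i < n" "x t i = min_val t"
proof -
  have "min_val t \<in> (\<lambda>j. x t j) ` {..<n}"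
    unfolding min_val_def by (rule Min_in) (use vertices_nonempty in auto)
  then show ?thesis using that by force
qed

lemma max_val_attained: obtains i where "i < n" "x t i = max_val t"
proof -
  have "max_val t \<in> (\<lambda>j. x t j) ` {..<n}"
    unfolding max_val_def by (rule Max_in) (use vertices_nonempty in auto)
  then show ?thesis using that by force
qed

text \<open>Each new value is a convex combination of the old ones; hence the minimum is
  nondecreasing and the maximum nonincreasing.\<close>
lemma averaging_between:
  assumes "i < n"
  shows "min_val t \<le> x (Suc t) i" and "x (Suc t) i \<le> max_val t"
proof -
  have "min_val t = (\<Sum>j<n. w i j * min_val t)" and "max_val t = (\<Sum>j<n. w i j * max_val t)"
    using row_sum[OF assms] by (simp_all add: sum_distrib_right[symmetric])
  moreover have "(\<Sum>j<n. w i j * min_val t) \<le> (\<Sum>j<n. w i j * x t j)"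
    and "(\<Sum>j<n. w i j * x t j) \<le> (\<Sum>j<n. w i j * max_val t)"
    by (rule sum_mono; use assms w_nonneg min_val_le max_val_ge in \<open>auto intro: mult_left_mono\<close>)+
  ultimately show "min_val t \<le> x (Suc t) i" "x (Suc t) i \<le> max_val t"
    by (simp_all add: averaging_Suc[OF assms])
qed

lemma min_val_mono: "t \<le> t' \<Longrightarrow> min_val t \<le> min_val t'"
proof (rule lift_Suc_mono_le[of min_val])
  fix t
  obtain i where "i < n" "x (Suc t) i = min_val (Suc t)" by (rule min_val_attained)
  then show "min_val t \<le> min_val (Suc t)" using averaging_between(1) by metis
qed

lemma max_val_antimono: "t \<le> t' \<Longrightarrow> max_val t' \<le> max_val t"
proof (rule lift_Suc_antimono_le[of max_val])
  fix t
  obtain i where "i < n" "x (Suc t) i = max_val (Suc t)" by (rule max_val_attained)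
  then show "max_val (Suc t) \<le> max_val t" using averaging_between(2) by metis
qed

definition influence :: "nat \<Rightarrow> nat \<Rightarrow> nat \<Rightarrow> real \<Rightarrow> bool" where
  "influence k i j \<delta> \<longleftrightarrow> (\<forall>t. \<delta> * (x t j - min_val t) \<le> x (t + k) i - min_val t)"

lemma influence_step:
  assumes i: "i < n" and l: "l < n" and j: "j < n" and infl: "influence k l j \<delta>" and \<delta>: "\<delta> \<ge> 0"
  shows "influence (Suc k) i j (w i l * \<delta>)"
  unfolding influence_def
proof
  fix t
  have below: "min_val t \<le> x (t + k) l'" if "l' < n" for l'
    using min_val_mono[of t "t + k"] min_val_le[OF that, of "t + k"] by simp
  have "w i l * (\<delta> * (x t j - min_val t)) \<le> w i l * (x (t + k) l - min_val t)"
    using infl w_nonneg[OF i l] unfolding influence_def by (intro mult_left_mono) auto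
  also have "\<dots> \<le> (\<Sum>l'<n. w i l' * (x (t + k) l' - min_val t))"
    by (rule member_le_sum[where f = "\<lambda>l'. w i l' * (x (t + k) l' - min_val t)"])
       (use l w_nonneg[OF i] below in \<open>auto intro: mult_nonneg_nonneg\<close>)
  also have "\<dots> = x (t + Suc k) i - min_val t"
    using averaging_Suc[OF i, of x0 "t + k"] row_sum[OF i]
    by (simp add: sum_subtractf right_diff_distrib sum_distrib_right[symmetric])
  finally show "w i l * \<delta> * (x t j - min_val t) \<le> x (t + Suc k) i - min_val t"
    by (simp add: mult.assoc)
qed

lemma influence_mono:
  assumes "influence k i j \<delta>" "0 \<le> \<delta>'" "\<delta>' \<le> \<delta>" "j < n"
  shows "influence k i j \<delta>'"
  unfolding influence_def
proof
  fix t
  have "0 \<le> x t j - min_val t" using min_val_le[OF assms(4)] by simp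
  then show "\<delta>' * (x t j - min_val t) \<le> x (t + k) i - min_val t"
    using assms unfolding influence_def by (meson mult_right_mono order_trans)
qed

lemma influence_path:
  assumes "(i, j) \<in> E\<^sup>*" "i < n" "j < n"
  shows "\<exists>k \<delta>. \<delta> > 0 \<and> influence k i j \<delta>"
  using assms
proof (induction rule: converse_rtrancl_induct)
  case base
  show ?case unfolding influence_def by (intro exI[of _ 0] exI[of _ 1]) simp
next
  case (step y z)
  have z: "z < n" using step.hyps(1) E_sub by auto
  obtain k \<delta> where \<delta>: "\<delta> > 0" and infl: "influence k z j \<delta>" using step.IH z step.prems by blast
  have "influence (Suc k) y j (w y z * \<delta>)"
    by (rule influence_step[OF step.prems(1) z step.prems(2) infl]) (use \<delta> in simp)
  moreover have "w y z * \<delta> > 0" using w_pos_iff[OF step.prems(1) z] step.hyps(1) \<delta> by simp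
  ultimately show ?case by blast
qed

lemma influence_wait:
  assumes "influence k i j \<delta>" "\<delta> > 0" "i < n" "j < n"
  shows "influence (k + l) i j (w i i ^ l * \<delta>)"
proof (induction l)
  case (Suc l)
  have "influence (Suc (k + l)) i j (w i i * (w i i ^ l * \<delta>))"
    by (rule influence_step[OF assms(3) assms(3) assms(4) Suc]) (use assms w_diag_pos[OF assms(3)] in simp)
  then show ?case by (simp add: mult.assoc)
qed (use assms in simp)

lemma uniform_influence: "\<exists>K \<delta>. K \<ge> 1 \<and> 0 < \<delta> \<and> \<delta> < 1 \<and> (\<forall>i<n. \<forall>j<n. influence K i j \<delta>)"
proof -
  define S where "S = {..<n} \<times> {..<n}"
  have fS: "finite S" and neS: "S \<noteq> {}" using vertices_nonempty by (auto simp: S_def)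
  have "\<forall>q\<in>S. \<exists>kd. snd kd > 0 \<and> influence (fst kd) (fst q) (snd q) (snd kd)"
    using influence_path E_connected by (fastforce simp: S_def)
  then obtain g where g: "\<And>q. q \<in> S \<Longrightarrow> snd (g q) > 0 \<and> influence (fst (g q)) (fst q) (snd q) (snd (g q))"
    by metis
  define K where "K = Max ((fst \<circ> g) ` S) + 1"
  have K_ge: "fst (g q) \<le> K" if "q \<in> S" for q
    using that fS unfolding K_def by (simp add: le_SucI)
  have "\<forall>q\<in>S. \<exists>d. d > 0 \<and> influence K (fst q) (snd q) d"
  proof
    fix q assume q: "q \<in> S"
    then have qn: "fst q < n" "snd q < n" by (auto simp: S_def)
    have "influence (fst (g q) + (K - fst (g q))) (fst q) (snd q)
            (w (fst q) (fst q) ^ (K - fst (g q)) * snd (g q))"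
      by (rule influence_wait) (use g[OF q] qn in auto)
    moreover have "w (fst q) (fst q) ^ (K - fst (g q)) * snd (g q) > 0"
      using g[OF q] w_diag_pos[OF qn(1)] by simp
    ultimately show "\<exists>d. d > 0 \<and> influence K (fst q) (snd q) d" using K_ge[OF q] by auto
  qed
  then obtain h where h: "\<And>q. q \<in> S \<Longrightarrow> h q > 0 \<and> influence K (fst q) (snd q) (h q)" by metis
  define \<delta> where "\<delta> = min (1/2) (Min (h ` S))"
  have "Min (h ` S) > 0" using fS neS h by (subst Min_gr_iff) auto
  then have \<delta>_pos: "\<delta> > 0" by (simp add: \<delta>_def)
  have "influence K i j \<delta>" if "i < n" "j < n" for i j
  proof -
    have q: "(i, j) \<in> S" using that by (simp add: S_def)
    have "\<delta> \<le> h (i, j)" unfolding \<delta>_def using fS q by (simp add: min.coboundedI2)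
    then show ?thesis using h[OF q] \<delta>_pos influence_mono that(2) by auto
  qed
  then show ?thesis using \<delta>_pos by (intro exI[of _ K] exI[of _ \<delta>]) (auto simp: K_def \<delta>_def)
qed

definition spread :: "nat \<Rightarrow> real" where "spread t = max_val t - min_val t"

lemma spread_nonneg: "spread t \<ge> 0"
  using min_val_le[of 0 t] max_val_ge[of 0 t] n_pos by (simp add: spread_def)

lemma spread_antimono: "t \<le> t' \<Longrightarrow> spread t' \<le> spread t"
  using min_val_mono max_val_antimono by (simp add: spread_def) (meson add_mono diff_mono)

lemma spread_contracts:
  assumes "\<forall>i<n. \<forall>j<n. influence K i j \<delta>"
  shows "spread (t + K) \<le> (1 - \<delta>) * spread t"
proof -
  obtain j where j: "j < n" "x t j = max_val t" by (rule max_val_attained)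
  obtain i where i: "i < n" "x (t + K) i = min_val (t + K)" by (rule min_val_attained)
  have "\<delta> * (max_val t - min_val t) \<le> min_val (t + K) - min_val t"
    using assms i j unfolding influence_def by metis
  moreover have "max_val (t + K) \<le> max_val t" by (rule max_val_antimono) simp
  ultimately show ?thesis by (simp add: spread_def algebra_simps)
qed

text \<open>Column sums equal to one preserve the total, hence the average.\<close>
lemma sum_preserved: "(\<Sum>i<n. x t i) = (\<Sum>i<n. x0 i)"
proof (induction t)
  case (Suc t)
  have "(\<Sum>i<n. x (Suc t) i) = (\<Sum>i<n. \<Sum>j<n. w i j * x t j)" by (simp add: averaging_Suc)
  also have "\<dots> = (\<Sum>j<n. \<Sum>i<n. w i j * x t j)" by (rule sum.swap)
  also have "\<dots> = (\<Sum>j<n. x t j)" by (simp add: sum_distrib_right[symmetric] col_sum)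
  finally show ?case using Suc by simp
qed simp

lemma average_between: "min_val t \<le> (1 / real n) * (\<Sum>j<n. x0 j)" "(1 / real n) * (\<Sum>j<n. x0 j) \<le> max_val t"
proof -
  have "real n * min_val t \<le> (\<Sum>j<n. x t j)" "(\<Sum>j<n. x t j) \<le> real n * max_val t"
    using sum_mono[of "{..<n}" "\<lambda>_. min_val t" "x t"] sum_mono[of "{..<n}" "x t" "\<lambda>_. max_val t"]
      min_val_le max_val_ge by auto
  then show "min_val t \<le> (1 / real n) * (\<Sum>j<n. x0 j)" "(1 / real n) * (\<Sum>j<n. x0 j) \<le> max_val t"
    using n_pos by (simp_all add: sum_preserved field_simps)
qed

theorem exponential_consensus:
  "\<exists>C \<rho>. C > 0 \<and> 0 < \<rho> \<and> \<rho> < 1 \<and> (\<forall>t. \<forall>i<n. \<bar>x t i - (1 / real n) * (\<Sum>j<n. x0 j)\<bar> \<le> C * \<rho> ^ t)"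
proof -
  obtain K \<delta> where K: "K \<ge> 1" and \<delta>: "0 < \<delta>" "\<delta> < 1" and infl: "\<forall>i<n. \<forall>j<n. influence K i j \<delta>"
    using uniform_influence by blast
  obtain C \<rho> where C\<rho>: "C > 0" "0 < \<rho>" "\<rho> < 1" and decay: "\<And>t. spread t \<le> C * \<rho> ^ t"
    using exponential_decay_of_periodic_contraction[of spread K \<delta>] spread_nonneg spread_antimono
      spread_contracts[OF infl] K \<delta> by blast
  have "\<bar>x t i - (1 / real n) * (\<Sum>j<n. x0 j)\<bar> \<le> C * \<rho> ^ t" if "i < n" for t i
    using min_val_le[OF that, of t] max_val_ge[OF that, of t] average_between[of t] decay[of t]
    by (simp add: spread_def abs_le_iff)
  then show ?thesis using C\<rho> by blast
qed

end

section \<open>Gaussian opinion dynamics\<close>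

lemma (in averaging_network) gaussian_agents:
  fixes \<mu> :: "nat \<Rightarrow> nat \<Rightarrow> real measure" and p0 s0 :: "nat \<Rightarrow> real"
  assumes s0_pos: "\<forall>i<n. s0 i > 0"
    and init: "\<forall>i<n. \<mu> i 0 = gaussian (p0 i) ((s0 i)\<^sup>2)"
    and update: "\<forall>t. \<forall>i<n. is_argmin_U2
                   (\<lambda>\<eta>. \<Sum>j\<in>nbhd E i. w i j * (W2 \<eta> (\<mu> j t))\<^sup>2) (\<mu> i (Suc t))"
    and i: "i < n"
  shows "\<mu> i t = gaussian (averaging w E p0 t i) ((averaging w E s0 t i)\<^sup>2)"
  using i
proof (induction t arbitrary: i)
  case 0
  then show ?case using init by simp
next
  case (Suc t)
  let ?p = "\<lambda>j. averaging w E p0 t j" and ?s = "\<lambda>j. averaging w E s0 t j"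
  have nb: "\<And>j. j \<in> nbhd E i \<Longrightarrow> j < n" using nbhd_sub by blast
  interpret gaussian_barycenter "nbhd E i" "w i" ?p ?s
  proof
    show "finite (nbhd E i)" using nbhd_sub finite_subset by blast
    show "(\<Sum>j\<in>nbhd E i. w i j) = 1" by (rule nbhd_weights[OF Suc.prems])
  qed (use nb w_nonneg averaging_pos[OF s0_pos] Suc.prems in auto)
  have cost: "(\<lambda>\<eta>. \<Sum>j\<in>nbhd E i. w i j * (W2 \<eta> (\<mu> j t))\<^sup>2) = bary_cost"
    using Suc.IH nb by (intro ext sum.cong) auto
  have "is_argmin_U2 (\<lambda>\<eta>. \<Sum>j\<in>nbhd E i. w i j * (W2 \<eta> (\<mu> j t))\<^sup>2) (\<mu> i (Suc t))"
    using update Suc.prems by blast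
  then have "is_argmin_U2 bary_cost (\<mu> i (Suc t))"
    by (simp only: cost)
  then have "\<mu> i (Suc t) = gaussian p_bar (\<sigma>_bar\<^sup>2)"
    by (rule barycenter_unique)
  then show ?case by (simp add: averaging.simps(2))
qed

lemma uniform_gaussian_barycenter:
  fixes \<nu> :: "nat \<Rightarrow> real measure" and p \<sigma> :: "nat \<Rightarrow> real"
  assumes n: "n \<ge> 1" and \<sigma>: "\<forall>j<n. \<sigma> j > 0" and \<nu>: "\<forall>j<n. \<nu> j = gaussian (p j) ((\<sigma> j)\<^sup>2)"
  defines "G \<equiv> gaussian ((1 / real n) * (\<Sum>j<n. p j)) (((1 / real n) * (\<Sum>j<n. \<sigma> j))\<^sup>2)"
  shows "is_argmin_U2 (\<lambda>\<eta>. (1 / real n) * (\<Sum>j<n. (W2 \<eta> (\<nu> j))\<^sup>2)) G"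
    and "\<And>\<eta>. is_argmin_U2 (\<lambda>\<eta>. (1 / real n) * (\<Sum>j<n. (W2 \<eta> (\<nu> j))\<^sup>2)) \<eta> \<Longrightarrow> \<eta> = G"
proof -
  interpret gaussian_barycenter "{..<n}" "\<lambda>_. 1 / real n" p \<sigma>
    by unfold_locales (use n \<sigma> in auto)
  have F: "(\<lambda>\<eta>. (1 / real n) * (\<Sum>j<n. (W2 \<eta> (\<nu> j))\<^sup>2)) = bary_cost"
    unfolding sum_distrib_left using \<nu> by (intro ext sum.cong) auto
  have G: "G = gaussian p_bar (\<sigma>_bar\<^sup>2)"
    by (simp add: G_def sum_distrib_left)
  show "is_argmin_U2 (\<lambda>\<eta>. (1 / real n) * (\<Sum>j<n. (W2 \<eta> (\<nu> j))\<^sup>2)) G"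
    unfolding F G by (rule barycenter_is_argmin)
  show "\<And>\<eta>. is_argmin_U2 (\<lambda>\<eta>. (1 / real n) * (\<Sum>j<n. (W2 \<eta> (\<nu> j))\<^sup>2)) \<eta> \<Longrightarrow> \<eta> = G"
    unfolding F G by (rule barycenter_unique)
qed

text \<open>Exponential convergence of every agent to the barycenter of the initial opinions:
  W2 between Gaussians is at most the sum of the mean and standard-deviation errors.\<close>
lemma (in averaging_network) gaussian_consensus:
  fixes \<mu> :: "nat \<Rightarrow> nat \<Rightarrow> real measure" and p0 s0 :: "nat \<Rightarrow> real"
  assumes s0_pos: "\<forall>i<n. s0 i > 0"
    and agents: "\<And>i t. i < n \<Longrightarrow> \<mu> i t = gaussian (averaging w E p0 t i) ((averaging w E s0 t i)\<^sup>2)"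
    and i: "i < n"
  shows "\<exists>C \<rho>. C > 0 \<and> 0 < \<rho> \<and> \<rho> < 1 \<and> (\<forall>t. W2 (\<mu> i t)
           (gaussian ((1 / real n) * (\<Sum>j<n. p0 j)) (((1 / real n) * (\<Sum>j<n. s0 j))\<^sup>2)) \<le> C * \<rho> ^ t)"
proof -
  interpret mean: averaging_run n E w p0 ..
  interpret sd: averaging_run n E w s0 ..
  let ?p = "(1 / real n) * (\<Sum>j<n. p0 j)" and ?s = "(1 / real n) * (\<Sum>j<n. s0 j)"
  have "(\<Sum>j<n. s0 j) > 0" by (rule sum_pos) (use n_pos s0_pos in \<open>auto simp: lessThan_empty_iff\<close>)
  then have s_pos: "?s > 0" using n_pos by simp
  obtain C1 r1 where 1: "C1 > 0" "0 < r1" "r1 < 1"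
    "\<And>t. \<bar>averaging w E p0 t i - ?p\<bar> \<le> C1 * r1 ^ t"
    using mean.exponential_consensus i by blast
  obtain C2 r2 where 2: "C2 > 0" "0 < r2" "r2 < 1"
    "\<And>t. \<bar>averaging w E s0 t i - ?s\<bar> \<le> C2 * r2 ^ t"
    using sd.exponential_consensus i by blast
  have "W2 (\<mu> i t) (gaussian ?p (?s\<^sup>2))
          \<le> \<bar>averaging w E p0 t i - ?p\<bar> + \<bar>averaging w E s0 t i - ?s\<bar>" for t
    unfolding agents[OF i] by (rule W2_gaussian_le[OF averaging_pos[OF s0_pos i] s_pos])
  then show ?thesis
    using exponential_decay_add[OF 1 2] by (meson order_trans)
qed

lemma (in averaging_network) gaussian_parameters:
  fixes \<mu> :: "nat \<Rightarrow> nat \<Rightarrow> real measure" and p0 P0 :: "nat \<Rightarrow> real"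
  assumes P0_pos: "\<forall>i<n. P0 i > 0"
    and agents: "\<And>i t. i < n \<Longrightarrow> \<mu> i t = gaussian (averaging w E p0 t i)
                                       ((averaging w E (\<lambda>i. sqrt (P0 i)) t i)\<^sup>2)"
  shows "\<exists>p P :: nat \<Rightarrow> nat \<Rightarrow> real. (\<forall>i<n. p i 0 = p0 i \<and> P i 0 = P0 i)
          \<and> (\<forall>t. \<forall>i<n. p i (Suc t) = (\<Sum>j\<in>nbhd E i. w i j * p j t)
                     \<and> sqrt (P i (Suc t)) = (\<Sum>j\<in>nbhd E i. w i j * sqrt (P j t)))
          \<and> (\<forall>t. \<forall>i<n. P i t > 0 \<and> \<mu> i t = gaussian (p i t) (P i t))"
proof -
  let ?p = "\<lambda>i t. averaging w E p0 t i" and ?s = "\<lambda>i t. averaging w E (\<lambda>i. sqrt (P0 i)) t i"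
  have s_pos: "\<And>i t. i < n \<Longrightarrow> ?s i t > 0"
    by (rule averaging_pos) (use P0_pos in simp)
  have sd_step: "sqrt ((?s i (Suc t))\<^sup>2) = (\<Sum>j\<in>nbhd E i. w i j * sqrt ((?s j t)\<^sup>2))"
    if "i < n" for i t
  proof -
    have "sqrt ((?s i (Suc t))\<^sup>2) = ?s i (Suc t)"
      using s_pos[OF that, of "Suc t"] by simp
    also have "\<dots> = (\<Sum>j\<in>nbhd E i. w i j * ?s j t)"
      by (simp add: averaging.simps(2))
    also have "\<dots> = (\<Sum>j\<in>nbhd E i. w i j * sqrt ((?s j t)\<^sup>2))"
      using s_pos nbhd_sub by (intro sum.cong) (auto simp: less_imp_le subset_iff)
    finally show ?thesis .
  qed
  have "\<forall>i<n. ?p i 0 = p0 i \<and> (?s i 0)\<^sup>2 = P0 i"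
    using P0_pos by (simp add: less_imp_le)
  moreover have "\<forall>t. \<forall>i<n. ?p i (Suc t) = (\<Sum>j\<in>nbhd E i. w i j * ?p j t)
                     \<and> sqrt ((?s i (Suc t))\<^sup>2) = (\<Sum>j\<in>nbhd E i. w i j * sqrt ((?s j t)\<^sup>2))"
    using sd_step by (simp add: averaging.simps(2))
  moreover have "\<forall>t. \<forall>i<n. (?s i t)\<^sup>2 > 0 \<and> \<mu> i t = gaussian (?p i t) ((?s i t)\<^sup>2)"
  proof (intro allI impI conjI)
    fix t i assume i: "i < n"
    show "(?s i t)\<^sup>2 > 0" using s_pos[OF i, of t] by simp
    show "\<mu> i t = gaussian (?p i t) ((?s i t)\<^sup>2)" by (rule agents[OF i])
  qed
  ultimately show ?thesis
    by (intro exI[of _ ?p] exI[of _ "\<lambda>i t. (?s i t)\<^sup>2"] conjI)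
qed

theorem proposition2:
  fixes n :: nat and E :: "(nat \<times> nat) set" and w :: "nat \<Rightarrow> nat \<Rightarrow> real"
    and \<mu> :: "nat \<Rightarrow> nat \<Rightarrow> real measure"
    and p0 P0 :: "nat \<Rightarrow> real"
  assumes graph: "connected_undirected_graph n E"
    and weights: "adapted_doubly_stochastic n E w"
    and init_pos: "\<forall>i<n. P0 i > 0"
    and init: "\<forall>i<n. \<mu> i 0 = gaussian (p0 i) (P0 i)"
    and update: "\<forall>t. \<forall>i<n. is_argmin_U2
                   (\<lambda>\<eta>. \<Sum>j\<in>nbhd E i. w i j * (W2 \<eta> (\<mu> j t))\<^sup>2) (\<mu> i (Suc t))"
  shows "(\<exists>p P :: nat \<Rightarrow> nat \<Rightarrow> real.
            (\<forall>i<n. p i 0 = p0 i \<and> P i 0 = P0 i)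
          \<and> (\<forall>t. \<forall>i<n. p i (Suc t) = (\<Sum>j\<in>nbhd E i. w i j * p j t)
                     \<and> sqrt (P i (Suc t)) = (\<Sum>j\<in>nbhd E i. w i j * sqrt (P j t)))
          \<and> (\<forall>t. \<forall>i<n. P i t > 0 \<and> \<mu> i t = gaussian (p i t) (P i t)))
      \<and> (\<exists>\<mu>s. is_argmin_U2 (\<lambda>\<eta>. (1 / real n) * (\<Sum>j<n. (W2 \<eta> (\<mu> j 0))\<^sup>2)) \<mu>s)
      \<and> (\<forall>\<mu>s. is_argmin_U2 (\<lambda>\<eta>. (1 / real n) * (\<Sum>j<n. (W2 \<eta> (\<mu> j 0))\<^sup>2)) \<mu>s \<longrightarrow>
           (\<forall>i<n. \<exists>C \<rho>. C > 0 \<and> 0 < \<rho> \<and> \<rho> < 1 \<and> (\<forall>t. W2 (\<mu> i t) \<mu>s \<le> C * \<rho> ^ t)))"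
proof -
  interpret averaging_network n E w using graph weights by unfold_locales
  define s0 where "s0 i = sqrt (P0 i)" for i
  have s0_pos: "\<forall>i<n. s0 i > 0" and init': "\<forall>i<n. \<mu> i 0 = gaussian (p0 i) ((s0 i)\<^sup>2)"
    using init_pos init by (auto simp: s0_def less_imp_le)
  have agents: "\<And>i t. i < n \<Longrightarrow> \<mu> i t = gaussian (averaging w E p0 t i) ((averaging w E s0 t i)\<^sup>2)"
    by (rule gaussian_agents[OF s0_pos init' update])
  note barycenter = uniform_gaussian_barycenter[OF n_pos s0_pos init']
  have convergence: "\<forall>\<mu>s. is_argmin_U2 (\<lambda>\<eta>. (1 / real n) * (\<Sum>j<n. (W2 \<eta> (\<mu> j 0))\<^sup>2)) \<mu>s \<longrightarrow>
           (\<forall>i<n. \<exists>C \<rho>. C > 0 \<and> 0 < \<rho> \<and> \<rho> < 1 \<and> (\<forall>t. W2 (\<mu> i t) \<mu>s \<le> C * \<rho> ^ t))"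
  proof (intro allI impI)
    fix \<mu>s i
    assume "is_argmin_U2 (\<lambda>\<eta>. (1 / real n) * (\<Sum>j<n. (W2 \<eta> (\<mu> j 0))\<^sup>2)) \<mu>s" and i: "i < n"
    then show "\<exists>C \<rho>. C > 0 \<and> 0 < \<rho> \<and> \<rho> < 1 \<and> (\<forall>t. W2 (\<mu> i t) \<mu>s \<le> C * \<rho> ^ t)"
      using barycenter(2) gaussian_consensus[OF s0_pos agents i] by metis
  qed
  show ?thesis
    using gaussian_parameters[OF init_pos agents[unfolded s0_def]] barycenter(1) convergence
    by blast
qed

end
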